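(* Let $(\mathcal C,\otimes,\mathbf 1)$ be a monoidal r-category, let $X\in\mathcal C$, and let $\mathrm{coev}_X:\mathbf 1\to X\otimes X^*$ be the canonical coevaluation morphism. Let $\mathrm{ev}_X:X^*\otimes X\to\mathbf 1$ be an arbitrary morphism. Then (suppressing associativity and unit constraints) the identity $$(\mathrm{id}_X\otimes \mathrm{ev}_X)\circ(\mathrm{coev}_X\otimes \mathrm{id}_X)=\mathrm{id}_X$$ holds if and only if the identity $$(\mathrm{ev}_X\otimes \mathrm{id}_{X^*})\circ(\mathrm{id}_{X^*}\otimes \mathrm{coev}_X)=\mathrm{id}_{X^*}$$ holds.
   Context: A monoidal category $(\mathcal C,\otimes,\mathbf 1)$ is called a monoidal r-category if (i) for every object $X$ the functor $Y\mapsto \mathrm{Hom}(\mathbf 1,X\otimes Y)$ is representable by an object $X^*$, i.e. there are isomorphisms $\mathrm{Hom}(\mathbf 1,X\otimes Y)\cong\mathrm{Hom}(X^*,Y)$ natural in $Y$; and (ii) the resulting functor $X\mapsto X^*$, $\mathcal C\to\mathcal C^{\mathrm{op}}$, is an equivalence of categories (its inverse is denoted $X\mapsto {}^*X$). The canonical coevaluation $\mathrm{coev}_X:\mathbf 1\to X\otimes X^*$ is the morphism corresponding to $\mathrm{id}_{X^*}$ under $\mathrm{Hom}(\mathbf 1,X\otimes X^* )\cong \mathrm{Hom}(X^*,X^* )$. *)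

theory Defs
  imports Main
begin

record ('o, 'm) moncat =
  Hom  :: "'o \<Rightarrow> 'o \<Rightarrow> 'm set"
  cmp  :: "'m \<Rightarrow> 'm \<Rightarrow> 'm"          \<comment> \<open>cmp g f = g \<circ> f\<close>
  idm  :: "'o \<Rightarrow> 'm"
  tobj :: "'o \<Rightarrow> 'o \<Rightarrow> 'o"
  tmor :: "'m \<Rightarrow> 'm \<Rightarrow> 'm"
  uobj :: "'o"
  asc  :: "'o \<Rightarrow> 'o \<Rightarrow> 'o \<Rightarrow> 'm"    \<comment> \<open>asc A B D : (A\<otimes>B)\<otimes>D \<rightarrow> A\<otimes>(B\<otimes>D)\<close>
  lun  :: "'o \<Rightarrow> 'm"                  \<comment> \<open>lun A : 1\<otimes>A \<rightarrow> A\<close>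
  run  :: "'o \<Rightarrow> 'm"                  \<comment> \<open>run A : A\<otimes>1 \<rightarrow> A\<close>

definition category :: "('o, 'm, 'z) moncat_scheme \<Rightarrow> bool" where
  "category C \<longleftrightarrow>
     (\<forall>A B A' B' f. f \<in> Hom C A B \<and> f \<in> Hom C A' B' \<longrightarrow> A = A' \<and> B = B') \<and>
     (\<forall>A. idm C A \<in> Hom C A A) \<and>
     (\<forall>A B D f g. f \<in> Hom C A B \<longrightarrow> g \<in> Hom C B D \<longrightarrow> cmp C g f \<in> Hom C A D) \<and>
     (\<forall>A B f. f \<in> Hom C A B \<longrightarrow> cmp C f (idm C A) = f \<and> cmp C (idm C B) f = f) \<and>
     (\<forall>A B D E f g h. f \<in> Hom C A B \<longrightarrow> g \<in> Hom C B D \<longrightarrow> h \<in> Hom C D E \<longrightarrow>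
        cmp C h (cmp C g f) = cmp C (cmp C h g) f)"

definition is_iso :: "('o, 'm, 'z) moncat_scheme \<Rightarrow> 'o \<Rightarrow> 'o \<Rightarrow> 'm \<Rightarrow> bool" where
  "is_iso C A B f \<longleftrightarrow> f \<in> Hom C A B \<and>
     (\<exists>g \<in> Hom C B A. cmp C g f = idm C A \<and> cmp C f g = idm C B)"

definition invm :: "('o, 'm, 'z) moncat_scheme \<Rightarrow> 'o \<Rightarrow> 'o \<Rightarrow> 'm \<Rightarrow> 'm" where
  "invm C A B f = (THE g. g \<in> Hom C B A \<and> cmp C g f = idm C A \<and> cmp C f g = idm C B)"

definition monoidal_cat :: "('o, 'm, 'z) moncat_scheme \<Rightarrow> bool" where
  "monoidal_cat C \<longleftrightarrow> category C \<and>
     \<comment> \<open>tensor is a bifunctor\<close>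
     (\<forall>A A' B B' f g. f \<in> Hom C A A' \<longrightarrow> g \<in> Hom C B B' \<longrightarrow>
        tmor C f g \<in> Hom C (tobj C A B) (tobj C A' B')) \<and>
     (\<forall>A B. tmor C (idm C A) (idm C B) = idm C (tobj C A B)) \<and>
     (\<forall>A A' A'' B B' B'' f f' g g'. f \<in> Hom C A A' \<longrightarrow> f' \<in> Hom C A' A'' \<longrightarrow>
        g \<in> Hom C B B' \<longrightarrow> g' \<in> Hom C B' B'' \<longrightarrow>
        tmor C (cmp C f' f) (cmp C g' g) = cmp C (tmor C f' g') (tmor C f g)) \<and>
     \<comment> \<open>associator: natural isomorphism\<close>
     (\<forall>A B D. is_iso C (tobj C (tobj C A B) D) (tobj C A (tobj C B D)) (asc C A B D)) \<and>
     (\<forall>A A' B B' D D' f g h. f \<in> Hom C A A' \<longrightarrow> g \<in> Hom C B B' \<longrightarrow> h \<in> Hom C D D' \<longrightarrow>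
        cmp C (asc C A' B' D') (tmor C (tmor C f g) h) =
        cmp C (tmor C f (tmor C g h)) (asc C A B D)) \<and>
     \<comment> \<open>unitors: natural isomorphisms\<close>
     (\<forall>A. is_iso C (tobj C (uobj C) A) A (lun C A)) \<and>
     (\<forall>A. is_iso C (tobj C A (uobj C)) A (run C A)) \<and>
     (\<forall>A B f. f \<in> Hom C A B \<longrightarrow>
        cmp C f (lun C A) = cmp C (lun C B) (tmor C (idm C (uobj C)) f)) \<and>
     (\<forall>A B f. f \<in> Hom C A B \<longrightarrow>
        cmp C f (run C A) = cmp C (run C B) (tmor C f (idm C (uobj C)))) \<and>
     \<comment> \<open>pentagon axiom\<close>
     (\<forall>A B D E.
        cmp C (asc C A B (tobj C D E)) (asc C (tobj C A B) D E) =
        cmp C (tmor C (idm C A) (asc C B D E))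
          (cmp C (asc C A (tobj C B D) E) (tmor C (asc C A B D) (idm C E)))) \<and>
     \<comment> \<open>triangle axiom\<close>
     (\<forall>A B. cmp C (tmor C (idm C A) (lun C B)) (asc C A (uobj C) B) =
        tmor C (run C A) (idm C B))"

text \<open>Condition (i): for every X, the functor Y \<mapsto> Hom(1, X\<otimes>Y) is represented by
  the object dual X, via bijections phi X Y : Hom(1, X\<otimes>Y) \<rightarrow> Hom(dual X, Y)
  natural in Y.\<close>
definition represents_duals ::
  "('o, 'm, 'z) moncat_scheme \<Rightarrow> ('o \<Rightarrow> 'o) \<Rightarrow> ('o \<Rightarrow> 'o \<Rightarrow> 'm \<Rightarrow> 'm) \<Rightarrow> bool" where
  "represents_duals C dual phi \<longleftrightarrow>
     (\<forall>X Y. bij_betw (phi X Y) (Hom C (uobj C) (tobj C X Y)) (Hom C (dual X) Y)) \<and>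
     (\<forall>X Y Y' h f. h \<in> Hom C Y Y' \<longrightarrow> f \<in> Hom C (uobj C) (tobj C X Y) \<longrightarrow>
        phi X Y' (cmp C (tmor C (idm C X) h) f) = cmp C h (phi X Y f))"

definition coev ::
  "('o, 'm, 'z) moncat_scheme \<Rightarrow> ('o \<Rightarrow> 'o) \<Rightarrow> ('o \<Rightarrow> 'o \<Rightarrow> 'm \<Rightarrow> 'm) \<Rightarrow> 'o \<Rightarrow> 'm" where
  "coev C dual phi X =
     (THE c. c \<in> Hom C (uobj C) (tobj C X (dual X)) \<and> phi X (dual X) c = idm C (dual X))"

text \<open>The action of X \<mapsto> X* on morphisms (determined by the representation via Yoneda):
  for f : X \<rightarrow> X', the morphism X'* \<rightarrow> X* corresponding to (f\<otimes>id) \<circ> coev_X.\<close>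
definition dual_mor ::
  "('o, 'm, 'z) moncat_scheme \<Rightarrow> ('o \<Rightarrow> 'o) \<Rightarrow> ('o \<Rightarrow> 'o \<Rightarrow> 'm \<Rightarrow> 'm) \<Rightarrow> 'o \<Rightarrow> 'o \<Rightarrow> 'm \<Rightarrow> 'm" where
  "dual_mor C dual phi X X' f =
     phi X' (dual X) (cmp C (tmor C f (idm C (dual X))) (coev C dual phi X))"

text \<open>Monoidal r-category: (i) representability and (ii) X \<mapsto> X* is an equivalence
  C \<rightarrow> C^op, i.e. fully faithful and essentially surjective.\<close>
definition r_category ::
  "('o, 'm, 'z) moncat_scheme \<Rightarrow> ('o \<Rightarrow> 'o) \<Rightarrow> ('o \<Rightarrow> 'o \<Rightarrow> 'm \<Rightarrow> 'm) \<Rightarrow> bool" where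
  "r_category C dual phi \<longleftrightarrow> monoidal_cat C \<and> represents_duals C dual phi \<and>
     (\<forall>X X'. bij_betw (dual_mor C dual phi X X') (Hom C X X') (Hom C (dual X') (dual X))) \<and>
     (\<forall>Y. \<exists>X f. is_iso C (dual X) Y f)"

end

theory Submission
  imports Defs
begin

(* Let c = coev_X and, for e : X* (x) X -> 1, let zigzag : X -> X and zagzig : X* -> X* be the
   two snake composites. Both (1 (x) zagzig) o c and (zigzag (x) 1) o c equal e applied to the
   middle two factors of c (x) c; besides naturality this needs only the pentagon, the triangle
   and Kelly's unit coherences, which follow from them. Naturality of the representing bijection
   phi sends the first morphism to zagzig, while phi sends the second to the dual of zigzag by
   definition. So zagzig is the dual of zigzag, and as the duality functor is faithful and
   preserves identities, zigzag = 1 iff zagzig = 1. *)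

locale monoidal_category =
  fixes C :: "('o, 'm, 'z) moncat_scheme"
  assumes monoidal: "monoidal_cat C"
begin

abbreviation compose (infixr "\<cdot>" 55) where "g \<cdot> f \<equiv> cmp C g f"
abbreviation tensor (infixr "\<otimes>" 60) where "f \<otimes> g \<equiv> tmor C f g"
abbreviation tensor_obj (infixr "\<odot>" 65) where "A \<odot> B \<equiv> tobj C A B"
abbreviation unit_obj ("\<I>") where "\<I> \<equiv> uobj C"
abbreviation ide ("\<one>\<^bsub>_\<^esub>") where "\<one>\<^bsub>A\<^esub> \<equiv> idm C A"
abbreviation assoc ("\<a>[_, _, _]") where "\<a>[A, B, D] \<equiv> asc C A B D"
abbreviation lunit ("\<l>[_]") where "\<l>[A] \<equiv> lun C A"
abbreviation runit ("\<r>[_]") where "\<r>[A] \<equiv> run C A"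
abbreviation assoc_inv ("\<a>\<^sup>-\<^sup>1[_, _, _]")
  where "\<a>\<^sup>-\<^sup>1[A, B, D] \<equiv> invm C ((A \<odot> B) \<odot> D) (A \<odot> B \<odot> D) \<a>[A, B, D]"
abbreviation lunit_inv ("\<l>\<^sup>-\<^sup>1[_]") where "\<l>\<^sup>-\<^sup>1[A] \<equiv> invm C (\<I> \<odot> A) A \<l>[A]"
abbreviation runit_inv ("\<r>\<^sup>-\<^sup>1[_]") where "\<r>\<^sup>-\<^sup>1[A] \<equiv> invm C (A \<odot> \<I>) A \<r>[A]"

lemma category: "category C"
  using monoidal unfolding monoidal_cat_def by auto

lemma hom_unique: "f \<in> Hom C A B \<Longrightarrow> f \<in> Hom C A' B' \<Longrightarrow> A = A' \<and> B = B'"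
  using category unfolding category_def by metis

lemma ide_in_hom: "\<one>\<^bsub>A\<^esub> \<in> Hom C A A"
  using category unfolding category_def by auto

lemma comp_in_hom: "f \<in> Hom C A B \<Longrightarrow> g \<in> Hom C B D \<Longrightarrow> g \<cdot> f \<in> Hom C A D"
  using category unfolding category_def by auto

lemma comp_ide_right: "f \<in> Hom C A B \<Longrightarrow> f \<cdot> \<one>\<^bsub>A\<^esub> = f"
  using category unfolding category_def by auto

lemma comp_ide_left: "f \<in> Hom C A B \<Longrightarrow> \<one>\<^bsub>B\<^esub> \<cdot> f = f"
  using category unfolding category_def by auto

lemma comp_assoc_hom:
  "f \<in> Hom C A B \<Longrightarrow> g \<in> Hom C B D \<Longrightarrow> h \<in> Hom C D E \<Longrightarrow> (h \<cdot> g) \<cdot> f = h \<cdot> g \<cdot> f"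
  using category unfolding category_def by metis

lemma tensor_in_hom:
  "f \<in> Hom C A A' \<Longrightarrow> g \<in> Hom C B B' \<Longrightarrow> f \<otimes> g \<in> Hom C (A \<odot> B) (A' \<odot> B')"
  using monoidal unfolding monoidal_cat_def by auto

lemma tensor_ide [simp]: "\<one>\<^bsub>A\<^esub> \<otimes> \<one>\<^bsub>B\<^esub> = \<one>\<^bsub>A \<odot> B\<^esub>"
  using monoidal unfolding monoidal_cat_def by auto

lemma interchange_hom:
  "f \<in> Hom C A A' \<Longrightarrow> f' \<in> Hom C A' A'' \<Longrightarrow> g \<in> Hom C B B' \<Longrightarrow> g' \<in> Hom C B' B'' \<Longrightarrow>
   (f' \<cdot> f) \<otimes> (g' \<cdot> g) = (f' \<otimes> g') \<cdot> (f \<otimes> g)"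
  using monoidal unfolding monoidal_cat_def by auto

lemma assoc_iso: "is_iso C ((A \<odot> B) \<odot> D) (A \<odot> B \<odot> D) \<a>[A, B, D]"
  using monoidal unfolding monoidal_cat_def by auto

lemma assoc_natural_hom:
  "f \<in> Hom C A A' \<Longrightarrow> g \<in> Hom C B B' \<Longrightarrow> h \<in> Hom C D D' \<Longrightarrow>
   \<a>[A', B', D'] \<cdot> ((f \<otimes> g) \<otimes> h) = (f \<otimes> g \<otimes> h) \<cdot> \<a>[A, B, D]"
  using monoidal unfolding monoidal_cat_def by auto

lemma lunit_iso: "is_iso C (\<I> \<odot> A) A \<l>[A]"
  using monoidal unfolding monoidal_cat_def by auto

lemma runit_iso: "is_iso C (A \<odot> \<I>) A \<r>[A]"
  using monoidal unfolding monoidal_cat_def by auto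

lemma lunit_natural_hom: "f \<in> Hom C A B \<Longrightarrow> f \<cdot> \<l>[A] = \<l>[B] \<cdot> (\<one>\<^bsub>\<I>\<^esub> \<otimes> f)"
  using monoidal unfolding monoidal_cat_def by auto

lemma runit_natural_hom: "f \<in> Hom C A B \<Longrightarrow> f \<cdot> \<r>[A] = \<r>[B] \<cdot> (f \<otimes> \<one>\<^bsub>\<I>\<^esub>)"
  using monoidal unfolding monoidal_cat_def by auto

lemma pentagon:
  "\<a>[A, B, D \<odot> E] \<cdot> \<a>[A \<odot> B, D, E] =
   (\<one>\<^bsub>A\<^esub> \<otimes> \<a>[B, D, E]) \<cdot> \<a>[A, B \<odot> D, E] \<cdot> (\<a>[A, B, D] \<otimes> \<one>\<^bsub>E\<^esub>)"
  using monoidal unfolding monoidal_cat_def by auto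

lemma triangle: "(\<one>\<^bsub>A\<^esub> \<otimes> \<l>[B]) \<cdot> \<a>[A, \<I>, B] = \<r>[A] \<otimes> \<one>\<^bsub>B\<^esub>"
  using monoidal unfolding monoidal_cat_def by auto

lemma iso_inverse:
  assumes "is_iso C A B f"
  shows "invm C A B f \<in> Hom C B A" "invm C A B f \<cdot> f = \<one>\<^bsub>A\<^esub>" "f \<cdot> invm C A B f = \<one>\<^bsub>B\<^esub>"
proof -
  from assms obtain g where f: "f \<in> Hom C A B"
    and g: "g \<in> Hom C B A" "g \<cdot> f = \<one>\<^bsub>A\<^esub>" "f \<cdot> g = \<one>\<^bsub>B\<^esub>"
    unfolding is_iso_def by blast
  have "g' = g" if "g' \<in> Hom C B A" "g' \<cdot> f = \<one>\<^bsub>A\<^esub>" for g'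
  proof -
    have "g' = g' \<cdot> f \<cdot> g" using comp_ide_right that(1) g(3) by simp
    also have "\<dots> = g" using comp_assoc_hom[OF g(1) f that(1)] comp_ide_left[OF g(1)] that(2) by simp
    finally show ?thesis .
  qed
  then have "invm C A B f = g"
    unfolding invm_def using g by blast
  with g show "invm C A B f \<in> Hom C B A" "invm C A B f \<cdot> f = \<one>\<^bsub>A\<^esub>" "f \<cdot> invm C A B f = \<one>\<^bsub>B\<^esub>"
    by simp_all
qed

text \<open>Hom-sets are disjoint, so every morphism has a domain and a codomain; stating
  composability through them lets the simplifier discharge it.\<close>

definition arr :: "'m \<Rightarrow> bool" where "arr f \<longleftrightarrow> (\<exists>A B. f \<in> Hom C A B)"
definition dom :: "'m \<Rightarrow> 'o" where "dom f = (THE A. \<exists>B. f \<in> Hom C A B)"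
definition cod :: "'m \<Rightarrow> 'o" where "cod f = (THE B. \<exists>A. f \<in> Hom C A B)"

lemma in_hom_iff: "f \<in> Hom C A B \<longleftrightarrow> arr f \<and> dom f = A \<and> cod f = B"
proof
  assume f: "f \<in> Hom C A B"
  have "dom f = A" unfolding dom_def using f hom_unique by blast
  moreover have "cod f = B" unfolding cod_def using f hom_unique by blast
  ultimately show "arr f \<and> dom f = A \<and> cod f = B" using f unfolding arr_def by blast
next
  assume "arr f \<and> dom f = A \<and> cod f = B"
  then obtain A' B' where f: "f \<in> Hom C A' B'" and "dom f = A" "cod f = B"
    unfolding arr_def by blast
  moreover have "dom f = A'" unfolding dom_def using f hom_unique by blast
  moreover have "cod f = B'" unfolding cod_def using f hom_unique by blast
  ultimately show "f \<in> Hom C A B" by simp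
qed

lemma arr_in_hom: "arr f \<Longrightarrow> f \<in> Hom C (dom f) (cod f)"
  by (simp add: in_hom_iff)

lemma assoc_in_hom: "\<a>[A, B, D] \<in> Hom C ((A \<odot> B) \<odot> D) (A \<odot> B \<odot> D)"
  and assoc_inv_in_hom: "\<a>\<^sup>-\<^sup>1[A, B, D] \<in> Hom C (A \<odot> B \<odot> D) ((A \<odot> B) \<odot> D)"
  and lunit_in_hom: "\<l>[A] \<in> Hom C (\<I> \<odot> A) A"
  and lunit_inv_in_hom: "\<l>\<^sup>-\<^sup>1[A] \<in> Hom C A (\<I> \<odot> A)"
  and runit_in_hom: "\<r>[A] \<in> Hom C (A \<odot> \<I>) A"
  and runit_inv_in_hom: "\<r>\<^sup>-\<^sup>1[A] \<in> Hom C A (A \<odot> \<I>)"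
  using assoc_iso lunit_iso runit_iso iso_inverse(1) unfolding is_iso_def by blast+

lemmas structure_dom_cod [simp] =
  ide_in_hom[unfolded in_hom_iff]
  assoc_in_hom[unfolded in_hom_iff] assoc_inv_in_hom[unfolded in_hom_iff]
  lunit_in_hom[unfolded in_hom_iff] lunit_inv_in_hom[unfolded in_hom_iff]
  runit_in_hom[unfolded in_hom_iff] runit_inv_in_hom[unfolded in_hom_iff]

lemma arr_comp [simp]: "arr f \<Longrightarrow> arr g \<Longrightarrow> cod f = dom g \<Longrightarrow> arr (g \<cdot> f)"
  and dom_comp [simp]: "arr f \<Longrightarrow> arr g \<Longrightarrow> cod f = dom g \<Longrightarrow> dom (g \<cdot> f) = dom f"
  and cod_comp [simp]: "arr f \<Longrightarrow> arr g \<Longrightarrow> cod f = dom g \<Longrightarrow> cod (g \<cdot> f) = cod g"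
  using comp_in_hom[of f "dom f" "cod f" g "cod g"] by (simp_all add: in_hom_iff)

lemma arr_tensor [simp]: "arr f \<Longrightarrow> arr g \<Longrightarrow> arr (f \<otimes> g)"
  and dom_tensor [simp]: "arr f \<Longrightarrow> arr g \<Longrightarrow> dom (f \<otimes> g) = dom f \<odot> dom g"
  and cod_tensor [simp]: "arr f \<Longrightarrow> arr g \<Longrightarrow> cod (f \<otimes> g) = cod f \<odot> cod g"
  using tensor_in_hom[OF arr_in_hom arr_in_hom, of f g] by (simp_all add: in_hom_iff)

lemma comp_assoc [simp]:
  "arr f \<Longrightarrow> arr g \<Longrightarrow> arr h \<Longrightarrow> cod f = dom g \<Longrightarrow> cod g = dom h \<Longrightarrow> (h \<cdot> g) \<cdot> f = h \<cdot> g \<cdot> f"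
  using comp_assoc_hom[of f "dom f" "cod f" g "cod g" h "cod h"] by (simp add: in_hom_iff)

lemma comp_ide_arr [simp]: "arr f \<Longrightarrow> cod f = B \<Longrightarrow> \<one>\<^bsub>B\<^esub> \<cdot> f = f"
  using comp_ide_left arr_in_hom by blast

lemma comp_arr_ide [simp]: "arr f \<Longrightarrow> dom f = A \<Longrightarrow> f \<cdot> \<one>\<^bsub>A\<^esub> = f"
  using comp_ide_right arr_in_hom by blast

lemma interchange:
  "arr f \<Longrightarrow> arr f' \<Longrightarrow> cod f = dom f' \<Longrightarrow> arr g \<Longrightarrow> arr g' \<Longrightarrow> cod g = dom g' \<Longrightarrow>
   (f' \<cdot> f) \<otimes> (g' \<cdot> g) = (f' \<otimes> g') \<cdot> (f \<otimes> g)"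
  using interchange_hom arr_in_hom by metis

lemma ide_tensor_comp [simp]:
  "arr f \<Longrightarrow> arr g \<Longrightarrow> cod f = dom g \<Longrightarrow> \<one>\<^bsub>A\<^esub> \<otimes> (g \<cdot> f) = (\<one>\<^bsub>A\<^esub> \<otimes> g) \<cdot> (\<one>\<^bsub>A\<^esub> \<otimes> f)"
  using interchange[of "\<one>\<^bsub>A\<^esub>" "\<one>\<^bsub>A\<^esub>" f g] by simp

lemma comp_tensor_ide [simp]:
  "arr f \<Longrightarrow> arr g \<Longrightarrow> cod f = dom g \<Longrightarrow> (g \<cdot> f) \<otimes> \<one>\<^bsub>A\<^esub> = (g \<otimes> \<one>\<^bsub>A\<^esub>) \<cdot> (f \<otimes> \<one>\<^bsub>A\<^esub>)"
  using interchange[of f g "\<one>\<^bsub>A\<^esub>" "\<one>\<^bsub>A\<^esub>"] by simp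

lemma precomp_eq2:
  assumes "g \<cdot> f = k \<cdot> h"
    and "arr f" "arr g" "cod f = dom g" "arr h" "arr k" "cod h = dom k" "arr x" "cod x = dom f"
  shows "g \<cdot> f \<cdot> x = k \<cdot> h \<cdot> x"
proof -
  have "dom h = dom f"
    using dom_comp[of f g] dom_comp[of h k] assms by metis
  then show ?thesis
    using comp_assoc[of x f g] comp_assoc[of x h k] assms by simp
qed

lemma precomp_eq:
  "g \<cdot> f = k \<Longrightarrow> arr f \<Longrightarrow> arr g \<Longrightarrow> cod f = dom g \<Longrightarrow> arr x \<Longrightarrow> cod x = dom f \<Longrightarrow>
   g \<cdot> f \<cdot> x = k \<cdot> x"
  using comp_assoc[of x f g] by simp

lemmas structure_inverse [simp] =
  iso_inverse(2,3)[OF assoc_iso] iso_inverse(2,3)[OF lunit_iso] iso_inverse(2,3)[OF runit_iso]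

lemma structure_inverse_precomp [simp]:
  "arr x \<Longrightarrow> cod x = (A \<odot> B) \<odot> D \<Longrightarrow> \<a>\<^sup>-\<^sup>1[A, B, D] \<cdot> \<a>[A, B, D] \<cdot> x = x"
  "arr x \<Longrightarrow> cod x = A \<odot> B \<odot> D \<Longrightarrow> \<a>[A, B, D] \<cdot> \<a>\<^sup>-\<^sup>1[A, B, D] \<cdot> x = x"
  "arr x \<Longrightarrow> cod x = \<I> \<odot> A \<Longrightarrow> \<l>\<^sup>-\<^sup>1[A] \<cdot> \<l>[A] \<cdot> x = x"
  "arr x \<Longrightarrow> cod x = A \<Longrightarrow> \<l>[A] \<cdot> \<l>\<^sup>-\<^sup>1[A] \<cdot> x = x"
  "arr x \<Longrightarrow> cod x = A \<odot> \<I> \<Longrightarrow> \<r>\<^sup>-\<^sup>1[A] \<cdot> \<r>[A] \<cdot> x = x"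
  "arr x \<Longrightarrow> cod x = A \<Longrightarrow> \<r>[A] \<cdot> \<r>\<^sup>-\<^sup>1[A] \<cdot> x = x"
  by (simp_all add: precomp_eq)

lemma assoc_natural:
  "arr f \<Longrightarrow> arr g \<Longrightarrow> arr h \<Longrightarrow>
   \<a>[cod f, cod g, cod h] \<cdot> ((f \<otimes> g) \<otimes> h) = (f \<otimes> g \<otimes> h) \<cdot> \<a>[dom f, dom g, dom h]"
  by (intro assoc_natural_hom arr_in_hom)

lemma lunit_natural: "arr f \<Longrightarrow> f \<cdot> \<l>[dom f] = \<l>[cod f] \<cdot> (\<one>\<^bsub>\<I>\<^esub> \<otimes> f)"
  by (intro lunit_natural_hom arr_in_hom)

lemma runit_natural: "arr f \<Longrightarrow> f \<cdot> \<r>[dom f] = \<r>[cod f] \<cdot> (f \<otimes> \<one>\<^bsub>\<I>\<^esub>)"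
  by (intro runit_natural_hom arr_in_hom)

lemma invert_square:
  assumes p: "is_iso C A B p" and q: "is_iso C A' B' q"
    and G: "G \<in> Hom C A A'" and F: "F \<in> Hom C B B'" and square: "q \<cdot> G = F \<cdot> p"
  shows "G \<cdot> invm C A B p = invm C A' B' q \<cdot> F"
proof -
  note p' = iso_inverse[OF p] and q' = iso_inverse[OF q]
  have p_hom: "p \<in> Hom C A B" and q_hom: "q \<in> Hom C A' B'"
    using p q unfolding is_iso_def by blast+
  note homs = G F p_hom q_hom p'(1) q'(1)
  have "G \<cdot> invm C A B p = (invm C A' B' q \<cdot> q) \<cdot> G \<cdot> invm C A B p"
    using homs q'(2) by (simp add: in_hom_iff)
  also have "\<dots> = invm C A' B' q \<cdot> (F \<cdot> p) \<cdot> invm C A B p"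
    using homs by (simp add: in_hom_iff flip: square)
  also have "\<dots> = invm C A' B' q \<cdot> F"
    using homs p'(3) by (simp add: in_hom_iff)
  finally show ?thesis .
qed

lemma assoc_inv_natural:
  assumes "arr f" "arr g" "arr h"
  shows "\<a>\<^sup>-\<^sup>1[cod f, cod g, cod h] \<cdot> (f \<otimes> g \<otimes> h) = ((f \<otimes> g) \<otimes> h) \<cdot> \<a>\<^sup>-\<^sup>1[dom f, dom g, dom h]"
  using invert_square[OF assoc_iso assoc_iso _ _ assoc_natural[OF assms]] assms
  by (simp add: in_hom_iff)

lemma lunit_inv_natural: "arr f \<Longrightarrow> (\<one>\<^bsub>\<I>\<^esub> \<otimes> f) \<cdot> \<l>\<^sup>-\<^sup>1[dom f] = \<l>\<^sup>-\<^sup>1[cod f] \<cdot> f"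
  using invert_square[OF lunit_iso lunit_iso _ _ lunit_natural[symmetric]] by (simp add: in_hom_iff)

lemma runit_inv_natural: "arr f \<Longrightarrow> (f \<otimes> \<one>\<^bsub>\<I>\<^esub>) \<cdot> \<r>\<^sup>-\<^sup>1[dom f] = \<r>\<^sup>-\<^sup>1[cod f] \<cdot> f"
  using invert_square[OF runit_iso runit_iso _ _ runit_natural[symmetric]] by (simp add: in_hom_iff)

lemma unit_tensor_cancel_left:
  assumes "\<one>\<^bsub>\<I>\<^esub> \<otimes> f = \<one>\<^bsub>\<I>\<^esub> \<otimes> g" "arr f" "arr g" "dom f = dom g" "cod f = cod g"
  shows "f = g"
proof -
  have unitor_conj: "\<l>[cod h] \<cdot> (\<one>\<^bsub>\<I>\<^esub> \<otimes> h) \<cdot> \<l>\<^sup>-\<^sup>1[dom h] = h" if "arr h" for h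
    using that by (simp add: lunit_inv_natural)
  show ?thesis using unitor_conj[OF assms(2)] unitor_conj[OF assms(3)] assms(1,4,5) by metis
qed

lemma unit_tensor_cancel_right:
  assumes "f \<otimes> \<one>\<^bsub>\<I>\<^esub> = g \<otimes> \<one>\<^bsub>\<I>\<^esub>" "arr f" "arr g" "dom f = dom g" "cod f = cod g"
  shows "f = g"
proof -
  have unitor_conj: "\<r>[cod h] \<cdot> (h \<otimes> \<one>\<^bsub>\<I>\<^esub>) \<cdot> \<r>\<^sup>-\<^sup>1[dom h] = h" if "arr h" for h
    using that by (simp add: runit_inv_natural)
  show ?thesis using unitor_conj[OF assms(2)] unitor_conj[OF assms(3)] assms(1,4,5) by metis
qed

lemma cancel_split_epi:
  assumes "f \<cdot> p = g \<cdot> p" "p \<cdot> q = \<one>\<^bsub>B\<^esub>"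
    and "arr f" "arr g" "arr p" "arr q" "dom f = B" "dom g = B" "cod p = B" "cod q = dom p"
  shows "f = g"
proof -
  have "f = (f \<cdot> p) \<cdot> q"
    using assms(2-10) by simp
  also have "\<dots> = (g \<cdot> p) \<cdot> q"
    using assms(1) by simp
  also have "\<dots> = g"
    using assms(2-10) by simp
  finally show ?thesis .
qed

lemma lunit_tensor: "\<l>[A \<odot> B] \<cdot> \<a>[\<I>, A, B] = \<l>[A] \<otimes> \<one>\<^bsub>B\<^esub>"
proof -
  \<comment> \<open>Kelly: after tensoring with \<open>\<one>\<^bsub>\<I>\<^esub>\<close> and precomposing the split epi \<open>?P\<close>,
    the pentagon and two triangles identify both sides.\<close>
  let ?P = "\<a>[\<I>, \<I> \<odot> A, B] \<cdot> (\<a>[\<I>, \<I>, A] \<otimes> \<one>\<^bsub>B\<^esub>)"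
  let ?Q = "(\<a>\<^sup>-\<^sup>1[\<I>, \<I>, A] \<otimes> \<one>\<^bsub>B\<^esub>) \<cdot> \<a>\<^sup>-\<^sup>1[\<I>, \<I> \<odot> A, B]"
  have "(\<a>[\<I>, \<I>, A] \<otimes> \<one>\<^bsub>B\<^esub>) \<cdot> (\<a>\<^sup>-\<^sup>1[\<I>, \<I>, A] \<otimes> \<one>\<^bsub>B\<^esub>) = \<one>\<^bsub>(\<I> \<odot> \<I> \<odot> A) \<odot> B\<^esub>"
    using comp_tensor_ide[of "\<a>\<^sup>-\<^sup>1[\<I>, \<I>, A]" "\<a>[\<I>, \<I>, A]" B] by simp
  then have PQ: "?P \<cdot> ?Q = \<one>\<^bsub>\<I> \<odot> (\<I> \<odot> A) \<odot> B\<^esub>"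
    by (simp add: precomp_eq)
  have "(\<one>\<^bsub>\<I>\<^esub> \<otimes> (\<l>[A \<odot> B] \<cdot> \<a>[\<I>, A, B])) \<cdot> ?P
      = (\<one>\<^bsub>\<I>\<^esub> \<otimes> \<l>[A \<odot> B]) \<cdot> (\<one>\<^bsub>\<I>\<^esub> \<otimes> \<a>[\<I>, A, B]) \<cdot> \<a>[\<I>, \<I> \<odot> A, B] \<cdot> (\<a>[\<I>, \<I>, A] \<otimes> \<one>\<^bsub>B\<^esub>)"
    by simp
  also have "\<dots> = (\<one>\<^bsub>\<I>\<^esub> \<otimes> \<l>[A \<odot> B]) \<cdot> \<a>[\<I>, \<I>, A \<odot> B] \<cdot> \<a>[\<I> \<odot> \<I>, A, B]"
    by (simp flip: pentagon)
  also have "\<dots> = (\<r>[\<I>] \<otimes> \<one>\<^bsub>A \<odot> B\<^esub>) \<cdot> \<a>[\<I> \<odot> \<I>, A, B]"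
    using precomp_eq[OF triangle, where x = "\<a>[\<I> \<odot> \<I>, A, B]"] by simp
  also have "\<dots> = \<a>[\<I>, A, B] \<cdot> ((\<r>[\<I>] \<otimes> \<one>\<^bsub>A\<^esub>) \<otimes> \<one>\<^bsub>B\<^esub>)"
    using assoc_natural[of "\<r>[\<I>]" "\<one>\<^bsub>A\<^esub>" "\<one>\<^bsub>B\<^esub>"] by simp
  also have "\<dots> = \<a>[\<I>, A, B] \<cdot> ((\<one>\<^bsub>\<I>\<^esub> \<otimes> \<l>[A]) \<otimes> \<one>\<^bsub>B\<^esub>) \<cdot> (\<a>[\<I>, \<I>, A] \<otimes> \<one>\<^bsub>B\<^esub>)"
    by (simp flip: triangle)
  also have "\<dots> = (\<one>\<^bsub>\<I>\<^esub> \<otimes> \<l>[A] \<otimes> \<one>\<^bsub>B\<^esub>) \<cdot> ?P"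
    using precomp_eq2[OF assoc_natural[of "\<one>\<^bsub>\<I>\<^esub>" "\<l>[A]" "\<one>\<^bsub>B\<^esub>"], where x = "\<a>[\<I>, \<I>, A] \<otimes> \<one>\<^bsub>B\<^esub>"]
    by simp
  finally have "\<one>\<^bsub>\<I>\<^esub> \<otimes> (\<l>[A \<odot> B] \<cdot> \<a>[\<I>, A, B]) = \<one>\<^bsub>\<I>\<^esub> \<otimes> \<l>[A] \<otimes> \<one>\<^bsub>B\<^esub>"
    by (rule cancel_split_epi[OF _ PQ]) simp_all
  then show ?thesis
    by (rule unit_tensor_cancel_left) simp_all
qed

lemma runit_tensor: "(\<one>\<^bsub>A\<^esub> \<otimes> \<r>[B]) \<cdot> \<a>[A, B, \<I>] = \<r>[A \<odot> B]"
proof -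
  have "\<one>\<^bsub>A\<^esub> \<otimes> ((\<one>\<^bsub>B\<^esub> \<otimes> \<l>[\<I>]) \<cdot> \<a>[B, \<I>, \<I>]) = \<one>\<^bsub>A\<^esub> \<otimes> \<r>[B] \<otimes> \<one>\<^bsub>\<I>\<^esub>"
    by (simp add: triangle)
  then have triangle_B: "(\<one>\<^bsub>A\<^esub> \<otimes> \<one>\<^bsub>B\<^esub> \<otimes> \<l>[\<I>]) \<cdot> (\<one>\<^bsub>A\<^esub> \<otimes> \<a>[B, \<I>, \<I>]) = \<one>\<^bsub>A\<^esub> \<otimes> \<r>[B] \<otimes> \<one>\<^bsub>\<I>\<^esub>"
    by simp
  have "\<a>[A, B, \<I>] \<cdot> (\<r>[A \<odot> B] \<otimes> \<one>\<^bsub>\<I>\<^esub>) = \<a>[A, B, \<I>] \<cdot> (\<one>\<^bsub>A \<odot> B\<^esub> \<otimes> \<l>[\<I>]) \<cdot> \<a>[A \<odot> B, \<I>, \<I>]"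
    by (simp flip: triangle)
  also have "\<dots> = (\<one>\<^bsub>A\<^esub> \<otimes> \<one>\<^bsub>B\<^esub> \<otimes> \<l>[\<I>]) \<cdot> \<a>[A, B, \<I> \<odot> \<I>] \<cdot> \<a>[A \<odot> B, \<I>, \<I>]"
    using precomp_eq2[OF assoc_natural[of "\<one>\<^bsub>A\<^esub>" "\<one>\<^bsub>B\<^esub>" "\<l>[\<I>]"], where x = "\<a>[A \<odot> B, \<I>, \<I>]"] by simp
  also have "\<dots> = (\<one>\<^bsub>A\<^esub> \<otimes> \<one>\<^bsub>B\<^esub> \<otimes> \<l>[\<I>]) \<cdot> (\<one>\<^bsub>A\<^esub> \<otimes> \<a>[B, \<I>, \<I>]) \<cdot> \<a>[A, B \<odot> \<I>, \<I>] \<cdot> (\<a>[A, B, \<I>] \<otimes> \<one>\<^bsub>\<I>\<^esub>)"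
    by (simp add: pentagon)
  also have "\<dots> = (\<one>\<^bsub>A\<^esub> \<otimes> \<r>[B] \<otimes> \<one>\<^bsub>\<I>\<^esub>) \<cdot> \<a>[A, B \<odot> \<I>, \<I>] \<cdot> (\<a>[A, B, \<I>] \<otimes> \<one>\<^bsub>\<I>\<^esub>)"
    using precomp_eq[OF triangle_B, where x = "\<a>[A, B \<odot> \<I>, \<I>] \<cdot> (\<a>[A, B, \<I>] \<otimes> \<one>\<^bsub>\<I>\<^esub>)"] by simp
  also have "\<dots> = \<a>[A, B, \<I>] \<cdot> ((\<one>\<^bsub>A\<^esub> \<otimes> \<r>[B]) \<otimes> \<one>\<^bsub>\<I>\<^esub>) \<cdot> (\<a>[A, B, \<I>] \<otimes> \<one>\<^bsub>\<I>\<^esub>)"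
    using precomp_eq2[OF assoc_natural[of "\<one>\<^bsub>A\<^esub>" "\<r>[B]" "\<one>\<^bsub>\<I>\<^esub>"], where x = "\<a>[A, B, \<I>] \<otimes> \<one>\<^bsub>\<I>\<^esub>"]
    by simp
  finally have "\<a>\<^sup>-\<^sup>1[A, B, \<I>] \<cdot> \<a>[A, B, \<I>] \<cdot> (\<r>[A \<odot> B] \<otimes> \<one>\<^bsub>\<I>\<^esub>)
      = \<a>\<^sup>-\<^sup>1[A, B, \<I>] \<cdot> \<a>[A, B, \<I>] \<cdot> ((\<one>\<^bsub>A\<^esub> \<otimes> \<r>[B]) \<otimes> \<one>\<^bsub>\<I>\<^esub>) \<cdot> (\<a>[A, B, \<I>] \<otimes> \<one>\<^bsub>\<I>\<^esub>)"
    by simp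
  then have "\<r>[A \<odot> B] \<otimes> \<one>\<^bsub>\<I>\<^esub> = ((\<one>\<^bsub>A\<^esub> \<otimes> \<r>[B]) \<cdot> \<a>[A, B, \<I>]) \<otimes> \<one>\<^bsub>\<I>\<^esub>"
    by simp
  then have "\<r>[A \<odot> B] = (\<one>\<^bsub>A\<^esub> \<otimes> \<r>[B]) \<cdot> \<a>[A, B, \<I>]"
    by (rule unit_tensor_cancel_right) simp_all
  then show ?thesis ..
qed

lemma lunit_unit_eq_runit_unit: "\<l>[\<I>] = \<r>[\<I>]"
proof -
  have "\<l>\<^sup>-\<^sup>1[\<I>] \<cdot> \<l>[\<I>] \<cdot> \<l>[\<I> \<odot> \<I>] = \<l>\<^sup>-\<^sup>1[\<I>] \<cdot> \<l>[\<I>] \<cdot> (\<one>\<^bsub>\<I>\<^esub> \<otimes> \<l>[\<I>])"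
    using lunit_natural[of "\<l>[\<I>]"] by simp
  then have "\<l>[\<I> \<odot> \<I>] = \<one>\<^bsub>\<I>\<^esub> \<otimes> \<l>[\<I>]"
    by simp
  then have "\<l>[\<I>] \<otimes> \<one>\<^bsub>\<I>\<^esub> = \<r>[\<I>] \<otimes> \<one>\<^bsub>\<I>\<^esub>"
    using lunit_tensor[of \<I> \<I>] triangle[of \<I> \<I>] by simp
  then show ?thesis
    by (rule unit_tensor_cancel_right) simp_all
qed

lemma assoc_runit_inv: "\<a>[A, B, \<I>] \<cdot> \<r>\<^sup>-\<^sup>1[A \<odot> B] = \<one>\<^bsub>A\<^esub> \<otimes> \<r>\<^sup>-\<^sup>1[B]"
proof -
  have inv: "(\<one>\<^bsub>A\<^esub> \<otimes> \<r>\<^sup>-\<^sup>1[B]) \<cdot> (\<one>\<^bsub>A\<^esub> \<otimes> \<r>[B]) = \<one>\<^bsub>A \<odot> B \<odot> \<I>\<^esub>"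
    using ide_tensor_comp[of "\<r>[B]" "\<r>\<^sup>-\<^sup>1[B]" A] by simp
  have "\<a>[A, B, \<I>] \<cdot> \<r>\<^sup>-\<^sup>1[A \<odot> B]
      = (\<one>\<^bsub>A\<^esub> \<otimes> \<r>\<^sup>-\<^sup>1[B]) \<cdot> (\<one>\<^bsub>A\<^esub> \<otimes> \<r>[B]) \<cdot> \<a>[A, B, \<I>] \<cdot> \<r>\<^sup>-\<^sup>1[A \<odot> B]"
    using precomp_eq[OF inv, where x = "\<a>[A, B, \<I>] \<cdot> \<r>\<^sup>-\<^sup>1[A \<odot> B]"] by simp
  also have "\<dots> = \<one>\<^bsub>A\<^esub> \<otimes> \<r>\<^sup>-\<^sup>1[B]"
    using precomp_eq[OF runit_tensor, where x = "\<r>\<^sup>-\<^sup>1[A \<odot> B]"] by simp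
  finally show ?thesis .
qed

lemma assoc_inv_lunit_inv: "\<a>\<^sup>-\<^sup>1[\<I>, A, B] \<cdot> \<l>\<^sup>-\<^sup>1[A \<odot> B] = \<l>\<^sup>-\<^sup>1[A] \<otimes> \<one>\<^bsub>B\<^esub>"
proof -
  have inv: "(\<l>\<^sup>-\<^sup>1[A] \<otimes> \<one>\<^bsub>B\<^esub>) \<cdot> (\<l>[A] \<otimes> \<one>\<^bsub>B\<^esub>) = \<one>\<^bsub>(\<I> \<odot> A) \<odot> B\<^esub>"
    using comp_tensor_ide[of "\<l>[A]" "\<l>\<^sup>-\<^sup>1[A]" B] by simp
  have "\<a>\<^sup>-\<^sup>1[\<I>, A, B] \<cdot> \<l>\<^sup>-\<^sup>1[A \<odot> B]
      = (\<l>\<^sup>-\<^sup>1[A] \<otimes> \<one>\<^bsub>B\<^esub>) \<cdot> (\<l>[A] \<otimes> \<one>\<^bsub>B\<^esub>) \<cdot> \<a>\<^sup>-\<^sup>1[\<I>, A, B] \<cdot> \<l>\<^sup>-\<^sup>1[A \<odot> B]"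
    using precomp_eq[OF inv, where x = "\<a>\<^sup>-\<^sup>1[\<I>, A, B] \<cdot> \<l>\<^sup>-\<^sup>1[A \<odot> B]"] by simp
  also have "\<dots> = \<l>\<^sup>-\<^sup>1[A] \<otimes> \<one>\<^bsub>B\<^esub>"
    by (simp flip: lunit_tensor)
  finally show ?thesis .
qed

lemma pentagon_assoc_inv:
  "(\<one>\<^bsub>A\<^esub> \<otimes> \<a>\<^sup>-\<^sup>1[B, D, E]) \<cdot> \<a>[A, B, D \<odot> E]
   = \<a>[A, B \<odot> D, E] \<cdot> (\<a>[A, B, D] \<otimes> \<one>\<^bsub>E\<^esub>) \<cdot> \<a>\<^sup>-\<^sup>1[A \<odot> B, D, E]"
proof -
  have inv: "(\<one>\<^bsub>A\<^esub> \<otimes> \<a>\<^sup>-\<^sup>1[B, D, E]) \<cdot> (\<one>\<^bsub>A\<^esub> \<otimes> \<a>[B, D, E]) = \<one>\<^bsub>A \<odot> (B \<odot> D) \<odot> E\<^esub>"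
    using ide_tensor_comp[of "\<a>[B, D, E]" "\<a>\<^sup>-\<^sup>1[B, D, E]" A] by simp
  have "(\<one>\<^bsub>A\<^esub> \<otimes> \<a>\<^sup>-\<^sup>1[B, D, E]) \<cdot> \<a>[A, B, D \<odot> E]
      = (\<one>\<^bsub>A\<^esub> \<otimes> \<a>\<^sup>-\<^sup>1[B, D, E]) \<cdot> \<a>[A, B, D \<odot> E] \<cdot> \<a>[A \<odot> B, D, E] \<cdot> \<a>\<^sup>-\<^sup>1[A \<odot> B, D, E]"
    by simp
  also have "\<dots> = (\<one>\<^bsub>A\<^esub> \<otimes> \<a>\<^sup>-\<^sup>1[B, D, E]) \<cdot> (\<one>\<^bsub>A\<^esub> \<otimes> \<a>[B, D, E]) \<cdot> \<a>[A, B \<odot> D, E]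
                \<cdot> (\<a>[A, B, D] \<otimes> \<one>\<^bsub>E\<^esub>) \<cdot> \<a>\<^sup>-\<^sup>1[A \<odot> B, D, E]"
    using precomp_eq2[OF pentagon[of A B D E], where x = "\<a>\<^sup>-\<^sup>1[A \<odot> B, D, E]"] by simp
  also have "\<dots> = \<a>[A, B \<odot> D, E] \<cdot> (\<a>[A, B, D] \<otimes> \<one>\<^bsub>E\<^esub>) \<cdot> \<a>\<^sup>-\<^sup>1[A \<odot> B, D, E]"
    using precomp_eq[OF inv, where x = "\<a>[A, B \<odot> D, E] \<cdot> (\<a>[A, B, D] \<otimes> \<one>\<^bsub>E\<^esub>) \<cdot> \<a>\<^sup>-\<^sup>1[A \<odot> B, D, E]"]
    by simp
  finally show ?thesis .
qed

definition zigzag :: "'o \<Rightarrow> 'o \<Rightarrow> 'm \<Rightarrow> 'm \<Rightarrow> 'm" where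
  "zigzag X D c e = \<r>[X] \<cdot> (\<one>\<^bsub>X\<^esub> \<otimes> e) \<cdot> \<a>[X, D, X] \<cdot> (c \<otimes> \<one>\<^bsub>X\<^esub>) \<cdot> \<l>\<^sup>-\<^sup>1[X]"

definition zagzig :: "'o \<Rightarrow> 'o \<Rightarrow> 'm \<Rightarrow> 'm \<Rightarrow> 'm" where
  "zagzig X D c e = \<l>[D] \<cdot> (e \<otimes> \<one>\<^bsub>D\<^esub>) \<cdot> \<a>\<^sup>-\<^sup>1[D, X, D] \<cdot> (\<one>\<^bsub>D\<^esub> \<otimes> c) \<cdot> \<r>\<^sup>-\<^sup>1[D]"

lemma zigzag_in_hom:
  "c \<in> Hom C \<I> (X \<odot> D) \<Longrightarrow> e \<in> Hom C (D \<odot> X) \<I> \<Longrightarrow> zigzag X D c e \<in> Hom C X X"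
  by (simp add: zigzag_def in_hom_iff)

lemma zagzig_in_hom:
  "c \<in> Hom C \<I> (X \<odot> D) \<Longrightarrow> e \<in> Hom C (D \<odot> X) \<I> \<Longrightarrow> zagzig X D c e \<in> Hom C D D"
  by (simp add: zagzig_def in_hom_iff)

lemma tensor_zagzig_comp:
  assumes "c \<in> Hom C \<I> (X \<odot> D)" "e \<in> Hom C (D \<odot> X) \<I>"
  shows "(\<one>\<^bsub>X\<^esub> \<otimes> zagzig X D c e) \<cdot> c
    = (\<one>\<^bsub>X\<^esub> \<otimes> \<l>[D]) \<cdot> (\<one>\<^bsub>X\<^esub> \<otimes> e \<otimes> \<one>\<^bsub>D\<^esub>) \<cdot> (\<one>\<^bsub>X\<^esub> \<otimes> \<a>\<^sup>-\<^sup>1[D, X, D]) \<cdot> \<a>[X, D, X \<odot> D]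
        \<cdot> (c \<otimes> c) \<cdot> \<r>\<^sup>-\<^sup>1[\<I>]"
proof -
  note [simp] = assms[unfolded in_hom_iff]
  let ?prefix = "(\<one>\<^bsub>X\<^esub> \<otimes> \<l>[D]) \<cdot> (\<one>\<^bsub>X\<^esub> \<otimes> e \<otimes> \<one>\<^bsub>D\<^esub>) \<cdot> (\<one>\<^bsub>X\<^esub> \<otimes> \<a>\<^sup>-\<^sup>1[D, X, D])"
  have "(\<one>\<^bsub>X\<^esub> \<otimes> zagzig X D c e) \<cdot> c
      = ?prefix \<cdot> (\<one>\<^bsub>X\<^esub> \<otimes> \<one>\<^bsub>D\<^esub> \<otimes> c) \<cdot> (\<one>\<^bsub>X\<^esub> \<otimes> \<r>\<^sup>-\<^sup>1[D]) \<cdot> c"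
    by (simp add: zagzig_def)
  also have "\<dots> = ?prefix \<cdot> (\<one>\<^bsub>X\<^esub> \<otimes> \<one>\<^bsub>D\<^esub> \<otimes> c) \<cdot> \<a>[X, D, \<I>] \<cdot> \<r>\<^sup>-\<^sup>1[X \<odot> D] \<cdot> c"
    using precomp_eq[OF assoc_runit_inv, where x = c] by simp
  also have "\<dots> = ?prefix \<cdot> \<a>[X, D, X \<odot> D] \<cdot> (\<one>\<^bsub>X \<odot> D\<^esub> \<otimes> c) \<cdot> \<r>\<^sup>-\<^sup>1[X \<odot> D] \<cdot> c"
    using precomp_eq2[OF assoc_natural[of "\<one>\<^bsub>X\<^esub>" "\<one>\<^bsub>D\<^esub>" c, symmetric],
        where x = "\<r>\<^sup>-\<^sup>1[X \<odot> D] \<cdot> c"]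
    by simp
  also have "\<dots> = ?prefix \<cdot> \<a>[X, D, X \<odot> D] \<cdot> (\<one>\<^bsub>X \<odot> D\<^esub> \<otimes> c) \<cdot> (c \<otimes> \<one>\<^bsub>\<I>\<^esub>) \<cdot> \<r>\<^sup>-\<^sup>1[\<I>]"
    using runit_inv_natural[of c] by simp
  also have "\<dots> = ?prefix \<cdot> \<a>[X, D, X \<odot> D] \<cdot> (c \<otimes> c) \<cdot> \<r>\<^sup>-\<^sup>1[\<I>]"
    using interchange[of c "\<one>\<^bsub>X \<odot> D\<^esub>" "\<one>\<^bsub>\<I>\<^esub>" c] precomp_eq[where x = "\<r>\<^sup>-\<^sup>1[\<I>]"]
    by simp
  finally show ?thesis
    by simp
qed

lemma zigzag_tensor_comp:
  assumes "c \<in> Hom C \<I> (X \<odot> D)" "e \<in> Hom C (D \<odot> X) \<I>"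
  shows "(zigzag X D c e \<otimes> \<one>\<^bsub>D\<^esub>) \<cdot> c
    = (\<one>\<^bsub>X\<^esub> \<otimes> \<l>[D]) \<cdot> (\<one>\<^bsub>X\<^esub> \<otimes> e \<otimes> \<one>\<^bsub>D\<^esub>) \<cdot> (\<one>\<^bsub>X\<^esub> \<otimes> \<a>\<^sup>-\<^sup>1[D, X, D]) \<cdot> \<a>[X, D, X \<odot> D]
        \<cdot> (c \<otimes> c) \<cdot> \<r>\<^sup>-\<^sup>1[\<I>]"
proof -
  note [simp] = assms[unfolded in_hom_iff]
  let ?prefix = "(\<r>[X] \<otimes> \<one>\<^bsub>D\<^esub>) \<cdot> ((\<one>\<^bsub>X\<^esub> \<otimes> e) \<otimes> \<one>\<^bsub>D\<^esub>) \<cdot> (\<a>[X, D, X] \<otimes> \<one>\<^bsub>D\<^esub>)"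
  have "(zigzag X D c e \<otimes> \<one>\<^bsub>D\<^esub>) \<cdot> c
      = ?prefix \<cdot> ((c \<otimes> \<one>\<^bsub>X\<^esub>) \<otimes> \<one>\<^bsub>D\<^esub>) \<cdot> (\<l>\<^sup>-\<^sup>1[X] \<otimes> \<one>\<^bsub>D\<^esub>) \<cdot> c"
    by (simp add: zigzag_def)
  also have "\<dots> = ?prefix \<cdot> ((c \<otimes> \<one>\<^bsub>X\<^esub>) \<otimes> \<one>\<^bsub>D\<^esub>) \<cdot> \<a>\<^sup>-\<^sup>1[\<I>, X, D] \<cdot> \<l>\<^sup>-\<^sup>1[X \<odot> D] \<cdot> c"
    using precomp_eq[OF assoc_inv_lunit_inv, where x = c] by simp
  also have "\<dots> = ?prefix \<cdot> ((c \<otimes> \<one>\<^bsub>X\<^esub>) \<otimes> \<one>\<^bsub>D\<^esub>) \<cdot> \<a>\<^sup>-\<^sup>1[\<I>, X, D] \<cdot> (\<one>\<^bsub>\<I>\<^esub> \<otimes> c) \<cdot> \<l>\<^sup>-\<^sup>1[\<I>]"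
    using lunit_inv_natural[of c] by simp
  also have "\<dots> = ?prefix \<cdot> \<a>\<^sup>-\<^sup>1[X \<odot> D, X, D] \<cdot> (c \<otimes> \<one>\<^bsub>X \<odot> D\<^esub>) \<cdot> (\<one>\<^bsub>\<I>\<^esub> \<otimes> c) \<cdot> \<l>\<^sup>-\<^sup>1[\<I>]"
    using precomp_eq2[OF assoc_inv_natural[of c "\<one>\<^bsub>X\<^esub>" "\<one>\<^bsub>D\<^esub>", symmetric],
        where x = "(\<one>\<^bsub>\<I>\<^esub> \<otimes> c) \<cdot> \<l>\<^sup>-\<^sup>1[\<I>]"]
    by simp
  also have "\<dots> = ?prefix \<cdot> \<a>\<^sup>-\<^sup>1[X \<odot> D, X, D] \<cdot> (c \<otimes> c) \<cdot> \<r>\<^sup>-\<^sup>1[\<I>]"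
    using interchange[of "\<one>\<^bsub>\<I>\<^esub>" c c "\<one>\<^bsub>X \<odot> D\<^esub>"] precomp_eq[where x = "\<l>\<^sup>-\<^sup>1[\<I>]"]
    by (simp add: lunit_unit_eq_runit_unit)
  also have "\<dots> = (\<one>\<^bsub>X\<^esub> \<otimes> \<l>[D]) \<cdot> \<a>[X, \<I>, D] \<cdot> ((\<one>\<^bsub>X\<^esub> \<otimes> e) \<otimes> \<one>\<^bsub>D\<^esub>) \<cdot> (\<a>[X, D, X] \<otimes> \<one>\<^bsub>D\<^esub>)
                \<cdot> \<a>\<^sup>-\<^sup>1[X \<odot> D, X, D] \<cdot> (c \<otimes> c) \<cdot> \<r>\<^sup>-\<^sup>1[\<I>]"
    by (simp flip: triangle)
  also have "\<dots> = (\<one>\<^bsub>X\<^esub> \<otimes> \<l>[D]) \<cdot> (\<one>\<^bsub>X\<^esub> \<otimes> e \<otimes> \<one>\<^bsub>D\<^esub>) \<cdot> \<a>[X, D \<odot> X, D] \<cdot> (\<a>[X, D, X] \<otimes> \<one>\<^bsub>D\<^esub>)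
                \<cdot> \<a>\<^sup>-\<^sup>1[X \<odot> D, X, D] \<cdot> (c \<otimes> c) \<cdot> \<r>\<^sup>-\<^sup>1[\<I>]"
    using precomp_eq2[OF assoc_natural[of "\<one>\<^bsub>X\<^esub>" e "\<one>\<^bsub>D\<^esub>"],
        where x = "(\<a>[X, D, X] \<otimes> \<one>\<^bsub>D\<^esub>) \<cdot> \<a>\<^sup>-\<^sup>1[X \<odot> D, X, D] \<cdot> (c \<otimes> c) \<cdot> \<r>\<^sup>-\<^sup>1[\<I>]"]
    by simp
  also have "\<dots> = (\<one>\<^bsub>X\<^esub> \<otimes> \<l>[D]) \<cdot> (\<one>\<^bsub>X\<^esub> \<otimes> e \<otimes> \<one>\<^bsub>D\<^esub>) \<cdot> (\<one>\<^bsub>X\<^esub> \<otimes> \<a>\<^sup>-\<^sup>1[D, X, D]) \<cdot> \<a>[X, D, X \<odot> D]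
                \<cdot> (c \<otimes> c) \<cdot> \<r>\<^sup>-\<^sup>1[\<I>]"
    using precomp_eq2[OF pentagon_assoc_inv[of X D X D, symmetric], where x = "(c \<otimes> c) \<cdot> \<r>\<^sup>-\<^sup>1[\<I>]"]
    by simp
  finally show ?thesis .
qed

lemma tensor_zagzig_comp_eq_zigzag_tensor_comp:
  "c \<in> Hom C \<I> (X \<odot> D) \<Longrightarrow> e \<in> Hom C (D \<odot> X) \<I> \<Longrightarrow>
   (\<one>\<^bsub>X\<^esub> \<otimes> zagzig X D c e) \<cdot> c = (zigzag X D c e \<otimes> \<one>\<^bsub>D\<^esub>) \<cdot> c"
  by (simp only: tensor_zagzig_comp zigzag_tensor_comp)

end

locale monoidal_r_category =
  fixes C :: "('o, 'm, 'z) moncat_scheme"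
    and dual :: "'o \<Rightarrow> 'o" and phi :: "'o \<Rightarrow> 'o \<Rightarrow> 'm \<Rightarrow> 'm"
  assumes r_category: "r_category C dual phi"

sublocale monoidal_r_category \<subseteq> monoidal_category
  by unfold_locales (rule r_category[unfolded r_category_def, THEN conjunct1])

context monoidal_r_category
begin

lemma phi_bij: "bij_betw (phi X Y) (Hom C \<I> (X \<odot> Y)) (Hom C (dual X) Y)"
  using r_category unfolding r_category_def represents_duals_def by simp

lemma phi_natural:
  "h \<in> Hom C Y Y' \<Longrightarrow> f \<in> Hom C \<I> (X \<odot> Y) \<Longrightarrow> phi X Y' ((\<one>\<^bsub>X\<^esub> \<otimes> h) \<cdot> f) = h \<cdot> phi X Y f"
  using r_category unfolding r_category_def represents_duals_def by simp

lemma dual_mor_inj: "inj_on (dual_mor C dual phi X X') (Hom C X X')"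
  using r_category unfolding r_category_def bij_betw_def by simp

lemma coev_in_hom: "coev C dual phi X \<in> Hom C \<I> (X \<odot> dual X)"
  and phi_coev: "phi X (dual X) (coev C dual phi X) = \<one>\<^bsub>dual X\<^esub>"
proof -
  have "\<one>\<^bsub>dual X\<^esub> \<in> phi X (dual X) ` Hom C \<I> (X \<odot> dual X)"
    using phi_bij[of X "dual X"] ide_in_hom unfolding bij_betw_def by simp
  then obtain c where c: "c \<in> Hom C \<I> (X \<odot> dual X)" "phi X (dual X) c = \<one>\<^bsub>dual X\<^esub>"
    by force
  have "coev C dual phi X = c"
    unfolding coev_def
  proof (rule the_equality)
    fix c' assume "c' \<in> Hom C \<I> (X \<odot> dual X) \<and> phi X (dual X) c' = \<one>\<^bsub>dual X\<^esub>"
    with c show "c' = c"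
      using phi_bij[of X "dual X"] unfolding bij_betw_def by (metis inj_onD)
  qed (use c in simp)
  with c show "coev C dual phi X \<in> Hom C \<I> (X \<odot> dual X)"
    and "phi X (dual X) (coev C dual phi X) = \<one>\<^bsub>dual X\<^esub>"
    by simp_all
qed

lemma phi_tensor_coev:
  "h \<in> Hom C (dual X) Y \<Longrightarrow> phi X Y ((\<one>\<^bsub>X\<^esub> \<otimes> h) \<cdot> coev C dual phi X) = h"
  using phi_natural[OF _ coev_in_hom] phi_coev comp_ide_right by simp

lemma dual_mor_ide: "dual_mor C dual phi X X \<one>\<^bsub>X\<^esub> = \<one>\<^bsub>dual X\<^esub>"
  using coev_in_hom[of X] by (simp add: dual_mor_def in_hom_iff phi_coev)

lemma dual_mor_zigzag:
  assumes "e \<in> Hom C (dual X \<odot> X) \<I>"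
  shows "dual_mor C dual phi X X (zigzag X (dual X) (coev C dual phi X) e)
    = zagzig X (dual X) (coev C dual phi X) e"
  using phi_tensor_coev[OF zagzig_in_hom[OF coev_in_hom assms]]
  by (simp add: dual_mor_def tensor_zagzig_comp_eq_zigzag_tensor_comp[OF coev_in_hom assms])

lemma zigzag_eq_ide_iff_zagzig_eq_ide:
  assumes "e \<in> Hom C (dual X \<odot> X) \<I>"
  shows "zigzag X (dual X) (coev C dual phi X) e = \<one>\<^bsub>X\<^esub>
    \<longleftrightarrow> zagzig X (dual X) (coev C dual phi X) e = \<one>\<^bsub>dual X\<^esub>"
proof
  assume "zigzag X (dual X) (coev C dual phi X) e = \<one>\<^bsub>X\<^esub>"
  then show "zagzig X (dual X) (coev C dual phi X) e = \<one>\<^bsub>dual X\<^esub>"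
    using dual_mor_zigzag[OF assms] dual_mor_ide by simp
next
  assume "zagzig X (dual X) (coev C dual phi X) e = \<one>\<^bsub>dual X\<^esub>"
  then have "dual_mor C dual phi X X (zigzag X (dual X) (coev C dual phi X) e)
      = dual_mor C dual phi X X \<one>\<^bsub>X\<^esub>"
    using dual_mor_zigzag[OF assms] dual_mor_ide by simp
  then show "zigzag X (dual X) (coev C dual phi X) e = \<one>\<^bsub>X\<^esub>"
    by (rule inj_onD[OF dual_mor_inj _ zigzag_in_hom[OF coev_in_hom assms] ide_in_hom])
qed

end

theorem lemma2p6:
  fixes C :: "('o, 'm, 'z) moncat_scheme"
    and dual :: "'o \<Rightarrow> 'o" and phi :: "'o \<Rightarrow> 'o \<Rightarrow> 'm \<Rightarrow> 'm"
    and X :: 'o and ev :: 'm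
  assumes "r_category C dual phi"
    and "ev \<in> Hom C (tobj C (dual X) X) (uobj C)"
  shows "cmp C (run C X)
           (cmp C (tmor C (idm C X) ev)
             (cmp C (asc C X (dual X) X)
               (cmp C (tmor C (coev C dual phi X) (idm C X))
                 (invm C (tobj C (uobj C) X) X (lun C X))))) = idm C X
     \<longleftrightarrow>
         cmp C (lun C (dual X))
           (cmp C (tmor C ev (idm C (dual X)))
             (cmp C (invm C (tobj C (tobj C (dual X) X) (dual X)) (tobj C (dual X) (tobj C X (dual X)))
                       (asc C (dual X) X (dual X)))
               (cmp C (tmor C (idm C (dual X)) (coev C dual phi X))
                 (invm C (tobj C (dual X) (uobj C)) (dual X) (run C (dual X)))))) = idm C (dual X)"
proof -
  interpret monoidal_r_category C dual phi
    using assms(1) by unfold_locales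
  show ?thesis
    using zigzag_eq_ide_iff_zagzig_eq_ide[OF assms(2)] unfolding zigzag_def zagzig_def .
qed

end
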